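(* Let $G$ and $H$ be graphs. If $H$ is a subdivision of $G$, then $\mathrm{ecrw}(G)\le 2\,\mathrm{ecrw}(H)$.
   Context: A tree-cut decomposition of a graph $G$ is a pair $\mathcal{T}=(T,\{X_t\}_{t\in V(T)})$ where $T$ is a tree and the bags $X_t\subseteq V(G)$ are pairwise disjoint (possibly empty) with $\bigcup_{t\in V(T)}X_t=V(G)$. For a node $t$ of $T$, let $T_1,\dots,T_m$ be the connected components of $T-t$ and $Z_i=\bigcup_{s\in V(T_i)}X_s$; $\mathrm{cross}_{\mathcal{T}}(t)$ is the number of edges of $G$ whose two endpoints lie in two distinct sets among $Z_1,\dots,Z_m$ (if $T$ has one node, $\mathrm{cross}_{\mathcal T}(t)=0$). The crossing number of $\mathcal{T}$ is $\max_{t}\mathrm{cross}_{\mathcal{T}}(t)$, and the thickness of $\mathcal{T}$ is $\max_t|X_t|$. The edge-crossing width of $\mathcal T$ is the maximum of its crossing number and its thickness, and $\mathrm{ecrw}(G)$ is the minimum edge-crossing width over all tree-cut decompositions of $G$. $H$ is a subdivision of $G$ if $H$ is obtained from $G$ by repeatedly subdividing edges. *)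

theory Defs
  imports Main
begin

type_synonym 'a graph = "'a set \<times> 'a set set"

definition verts :: "'a graph \<Rightarrow> 'a set" where "verts G = fst G"
definition edges :: "'a graph \<Rightarrow> 'a set set" where "edges G = snd G"

definition wf_graph :: "'a graph \<Rightarrow> bool" where
  "wf_graph G \<longleftrightarrow> finite (verts G) \<and>
     (\<forall>e\<in>edges G. \<exists>u v. e = {u, v} \<and> u \<noteq> v \<and> u \<in> verts G \<and> v \<in> verts G)"

definition adj :: "'a graph \<Rightarrow> 'a \<Rightarrow> 'a \<Rightarrow> bool" where
  "adj G u v \<longleftrightarrow> {u, v} \<in> edges G"

definition connected_graph :: "'a graph \<Rightarrow> bool" where
  "connected_graph G \<longleftrightarrow> (\<forall>u\<in>verts G. \<forall>v\<in>verts G. (adj G)\<^sup>*\<^sup>* u v)"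

definition has_cycle :: "'a graph \<Rightarrow> bool" where
  "has_cycle G \<longleftrightarrow> (\<exists>cs. length cs \<ge> 3 \<and> distinct cs \<and> set cs \<subseteq> verts G \<and>
      (\<forall>i. Suc i < length cs \<longrightarrow> adj G (cs ! i) (cs ! Suc i)) \<and>
      adj G (last cs) (hd cs))"

definition is_tree :: "'a graph \<Rightarrow> bool" where
  "is_tree T \<longleftrightarrow> wf_graph T \<and> verts T \<noteq> {} \<and> connected_graph T \<and> \<not> has_cycle T"

definition tree_cut_decomp :: "'a graph \<Rightarrow> nat graph \<Rightarrow> (nat \<Rightarrow> 'a set) \<Rightarrow> bool" where
  "tree_cut_decomp G T X \<longleftrightarrow> is_tree T \<and>
     (\<forall>s\<in>verts T. \<forall>t\<in>verts T. s \<noteq> t \<longrightarrow> X s \<inter> X t = {}) \<and>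
     (\<Union>t\<in>verts T. X t) = verts G"

text \<open>Vertex sets of the connected components of T - t.\<close>
definition comps_minus :: "nat graph \<Rightarrow> nat \<Rightarrow> nat set set" where
  "comps_minus T t =
     {{b \<in> verts T - {t}. (\<lambda>x y. adj T x y \<and> x \<noteq> t \<and> y \<noteq> t)\<^sup>*\<^sup>* a b} | a. a \<in> verts T - {t}}"

definition cross :: "'a graph \<Rightarrow> nat graph \<Rightarrow> (nat \<Rightarrow> 'a set) \<Rightarrow> nat \<Rightarrow> nat" where
  "cross G T X t = card {e \<in> edges G. \<exists>C1\<in>comps_minus T t. \<exists>C2\<in>comps_minus T t. C1 \<noteq> C2 \<and>
      (\<exists>x\<in>(\<Union>s\<in>C1. X s). \<exists>y\<in>(\<Union>s\<in>C2. X s). e = {x, y})}"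

definition crossing_number :: "'a graph \<Rightarrow> nat graph \<Rightarrow> (nat \<Rightarrow> 'a set) \<Rightarrow> nat" where
  "crossing_number G T X = Max ((\<lambda>t. cross G T X t) ` verts T)"

definition thickness :: "nat graph \<Rightarrow> (nat \<Rightarrow> 'a set) \<Rightarrow> nat" where
  "thickness T X = Max ((\<lambda>t. card (X t)) ` verts T)"

definition ec_width :: "'a graph \<Rightarrow> nat graph \<Rightarrow> (nat \<Rightarrow> 'a set) \<Rightarrow> nat" where
  "ec_width G T X = max (crossing_number G T X) (thickness T X)"

definition ecrw :: "'a graph \<Rightarrow> nat" where
  "ecrw G = (LEAST w. \<exists>T X. tree_cut_decomp G T X \<and> w = ec_width G T X)"

definition subdiv_step :: "'a graph \<Rightarrow> 'a graph \<Rightarrow> bool" where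
  "subdiv_step G H \<longleftrightarrow> (\<exists>u v w. {u, v} \<in> edges G \<and> w \<notin> verts G \<and>
      H = (insert w (verts G), (edges G - {{u, v}}) \<union> {{u, w}, {w, v}}))"

definition is_subdivision :: "'a graph \<Rightarrow> 'a graph \<Rightarrow> bool" where
  "is_subdivision H G \<longleftrightarrow> subdiv_step\<^sup>*\<^sup>* G H"

end

theory Submission
  imports Defs
begin

text \<open>
  Since H is a subdivision of G, every edge e of G is realised in H by a path joining the ends
  of e, and the inner vertices and edges of these paths are private to e. Take an optimal
  tree-cut decomposition of H and intersect every bag with the vertices of G. An edge of G
  crossing at a node t either has an inner path vertex in the bag of t, or its path contains an
  edge of H crossing at t. Since the paths are disjoint, this charges each crossing edge of G
  injectively to a vertex of the bag or to a crossing edge of H, so the width at most doubles.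
\<close>

lemma wf_graph_edge_ends:
  "wf_graph H \<Longrightarrow> {a, b} \<in> edges H \<Longrightarrow> a \<in> verts H \<and> b \<in> verts H \<and> a \<noteq> b"
  unfolding wf_graph_def by (auto simp: doubleton_eq_iff)

lemma wf_graph_finite_edges: "wf_graph H \<Longrightarrow> finite (edges H)"
proof -
  assume wf: "wf_graph H"
  then have "edges H \<subseteq> Pow (verts H)" and "finite (verts H)"
    unfolding wf_graph_def by auto
  then show ?thesis by (meson finite_Pow_iff finite_subset)
qed

lemma wf_graph_subdiv_step: "wf_graph H \<Longrightarrow> subdiv_step H H' \<Longrightarrow> wf_graph H'"
proof -
  assume wf: "wf_graph H" and "subdiv_step H H'"
  then obtain a b x where ab: "{a, b} \<in> edges H" and x: "x \<notin> verts H"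
    and H': "H' = (insert x (verts H), (edges H - {{a, b}}) \<union> {{a, x}, {x, b}})"
    unfolding subdiv_step_def by blast
  from wf_graph_edge_ends[OF wf ab] x have "a \<in> verts H" "b \<in> verts H" "a \<noteq> x" "b \<noteq> x"
    by auto
  with wf show ?thesis
    unfolding H' wf_graph_def verts_def edges_def by fastforce
qed

subsection \<open>Paths of H realising the edges of G\<close>

locale path_embedding =
  fixes G H :: "'a graph" and I :: "'a set \<Rightarrow> 'a set" and E :: "'a set \<Rightarrow> 'a set set"
  assumes verts_subset: "verts G \<subseteq> verts H"
    and inner_subset: "e \<in> edges G \<Longrightarrow> I e \<subseteq> verts H"
    and path_edges_subset: "e \<in> edges G \<Longrightarrow> E e \<subseteq> edges H"
    and path_edge_subset: "e \<in> edges G \<Longrightarrow> h \<in> E e \<Longrightarrow> h \<subseteq> e \<union> I e"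
    and path_connects: "e \<in> edges G \<Longrightarrow> e = {u, v} \<Longrightarrow> (\<lambda>x y. {x, y} \<in> E e)\<^sup>*\<^sup>* u v"
    and inner_disjoint: "e \<in> edges G \<Longrightarrow> e' \<in> edges G \<Longrightarrow> e \<noteq> e' \<Longrightarrow> I e \<inter> I e' = {}"
    and path_edges_disjoint: "e \<in> edges G \<Longrightarrow> e' \<in> edges G \<Longrightarrow> e \<noteq> e' \<Longrightarrow> E e \<inter> E e' = {}"

lemma path_embedding_refl: "path_embedding G G (\<lambda>_. {}) (\<lambda>e. {e})"
  by unfold_locales auto

lemma rtranclp_edge_walk_subdivide:
  assumes "(\<lambda>x y. {x, y} \<in> S)\<^sup>*\<^sup>* u v" and "{a, b} \<in> S"
  shows "(\<lambda>x y. {x, y} \<in> S - {{a, b}} \<union> {{a, w}, {w, b}})\<^sup>*\<^sup>* u v"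
  using assms(1)
proof (induction rule: rtranclp_induct)
  case base
  then show ?case by simp
next
  case (step y z)
  let ?R = "\<lambda>x y. {x, y} \<in> S - {{a, b}} \<union> {{a, w}, {w, b}}"
  have "?R\<^sup>*\<^sup>* y z"
  proof (cases "{y, z} = {a, b}")
    case True
    have "?R a w" "?R w b" "?R b w" "?R w a" by (simp_all add: insert_commute)
    then have "?R\<^sup>*\<^sup>* a b" "?R\<^sup>*\<^sup>* b a" by (meson converse_rtranclp_into_rtranclp r_into_rtranclp)+
    with True show ?thesis by (auto simp: doubleton_eq_iff)
  next
    case False
    with step.hyps(2) show ?thesis by auto
  qed
  with step.IH show ?case by (rule rtranclp_trans)
qed

lemma (in path_embedding) path_embedding_subdiv_step:
  assumes wf: "wf_graph H" and "subdiv_step H H'"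
  shows "\<exists>I' E'. path_embedding G H' I' E'"
proof -
  from \<open>subdiv_step H H'\<close> obtain a b x where ab: "{a, b} \<in> edges H" and x: "x \<notin> verts H"
    and H': "H' = (insert x (verts H), (edges H - {{a, b}}) \<union> {{a, x}, {x, b}})"
    unfolding subdiv_step_def by blast
  have verts_H': "verts H' = insert x (verts H)"
    and edges_H': "edges H' = (edges H - {{a, b}}) \<union> {{a, x}, {x, b}}"
    unfolding H' verts_def edges_def by auto
  have new_edges: "{a, x} \<notin> edges H" "{x, b} \<notin> edges H"
    using wf_graph_edge_ends[OF wf, of a x] wf_graph_edge_ends[OF wf, of x b] x by blast+
  define I' where "I' e = (if {a, b} \<in> E e then insert x (I e) else I e)" for e
  define E' where "E' e = (if {a, b} \<in> E e then E e - {{a, b}} \<union> {{a, x}, {x, b}} else E e)" for e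
  have "path_embedding G H' I' E'"
  proof unfold_locales
    show "verts G \<subseteq> verts H'" using verts_subset verts_H' by blast
  next
    fix e assume "e \<in> edges G"
    then show "I' e \<subseteq> verts H'" using inner_subset verts_H' unfolding I'_def by auto
  next
    fix e assume "e \<in> edges G"
    then show "E' e \<subseteq> edges H'" using path_edges_subset edges_H' unfolding E'_def by auto
  next
    fix e h assume e: "e \<in> edges G" and h: "h \<in> E' e"
    show "h \<subseteq> e \<union> I' e"
    proof (cases "{a, b} \<in> E e")
      case True
      then have "a \<in> e \<union> I e" "b \<in> e \<union> I e" using path_edge_subset[OF e] by blast+
      with True h path_edge_subset[OF e] show ?thesis unfolding E'_def I'_def by auto
    next
      case False
      with h path_edge_subset[OF e] show ?thesis unfolding E'_def I'_def by auto
    qed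
  next
    fix e u v assume "e \<in> edges G" "e = {u, v}"
    then have "(\<lambda>y z. {y, z} \<in> E e)\<^sup>*\<^sup>* u v" by (rule path_connects)
    then show "(\<lambda>y z. {y, z} \<in> E' e)\<^sup>*\<^sup>* u v"
      unfolding E'_def using rtranclp_edge_walk_subdivide[where w = x] by auto
  next
    fix e e' assume e: "e \<in> edges G" and e': "e' \<in> edges G" and "e \<noteq> e'"
    then have "I e \<inter> I e' = {}" "E e \<inter> E e' = {}"
      by (rule inner_disjoint, rule path_edges_disjoint)
    moreover have "x \<notin> I e \<union> I e'" using inner_subset[OF e] inner_subset[OF e'] x by blast
    ultimately show "I' e \<inter> I' e' = {}" unfolding I'_def by auto
  next
    fix e e' assume e: "e \<in> edges G" and e': "e' \<in> edges G" and "e \<noteq> e'"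
    then have "E e \<inter> E e' = {}" by (rule path_edges_disjoint)
    moreover have "{a, x} \<notin> E e \<union> E e'" "{x, b} \<notin> E e \<union> E e'"
      using path_edges_subset[OF e] path_edges_subset[OF e'] new_edges by blast+
    ultimately show "E' e \<inter> E' e' = {}" unfolding E'_def by auto
  qed
  then show ?thesis by blast
qed

lemma subdivision_path_embedding:
  assumes "subdiv_step\<^sup>*\<^sup>* G H" and "wf_graph G"
  shows "wf_graph H \<and> (\<exists>I E. path_embedding G H I E)"
  using assms
proof (induction rule: rtranclp_induct)
  case base
  then show ?case using path_embedding_refl by blast
next
  case (step H H')
  then show ?case
    using wf_graph_subdiv_step path_embedding.path_embedding_subdiv_step by blast
qed

subsection \<open>Components of T - t and crossing edges\<close>

lemma comps_minus_iff:
  "C \<in> comps_minus T t \<longleftrightarrow> (\<exists>a \<in> verts T - {t}.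
     C = {b \<in> verts T - {t}. (\<lambda>x y. adj T x y \<and> x \<noteq> t \<and> y \<noteq> t)\<^sup>*\<^sup>* a b})"
  unfolding comps_minus_def by blast

lemma comps_minus_subset: "C \<in> comps_minus T t \<Longrightarrow> C \<subseteq> verts T - {t}"
  by (auto simp: comps_minus_iff)

lemma comps_minus_cover:
  assumes "s \<in> verts T - {t}"
  shows "\<exists>D \<in> comps_minus T t. s \<in> D"
proof
  show "{b \<in> verts T - {t}. (\<lambda>x y. adj T x y \<and> x \<noteq> t \<and> y \<noteq> t)\<^sup>*\<^sup>* s b} \<in> comps_minus T t"
    using assms unfolding comps_minus_iff by blast
qed (use assms in simp)

lemma comps_minus_eqI:
  assumes "C1 \<in> comps_minus T t" "C2 \<in> comps_minus T t" "s \<in> C1" "s \<in> C2"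
  shows "C1 = C2"
proof -
  let ?R = "\<lambda>x y. adj T x y \<and> x \<noteq> t \<and> y \<noteq> t"
  have "symp ?R" unfolding symp_def adj_def by (auto simp: insert_commute)
  then have sym: "?R\<^sup>*\<^sup>* x y \<Longrightarrow> ?R\<^sup>*\<^sup>* y x" for x y by (meson symp_rtranclp sympD)
  obtain a1 a2 where a1: "C1 = {b \<in> verts T - {t}. ?R\<^sup>*\<^sup>* a1 b}"
    and a2: "C2 = {b \<in> verts T - {t}. ?R\<^sup>*\<^sup>* a2 b}"
    using assms(1,2) unfolding comps_minus_iff by blast
  have "?R\<^sup>*\<^sup>* a1 s" "?R\<^sup>*\<^sup>* a2 s" using assms(3,4) a1 a2 by auto
  then have "?R\<^sup>*\<^sup>* a1 b \<longleftrightarrow> ?R\<^sup>*\<^sup>* a2 b" for b using sym by (meson rtranclp_trans)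
  then show ?thesis using a1 a2 by auto
qed

definition crossing_edges :: "'a graph \<Rightarrow> nat graph \<Rightarrow> (nat \<Rightarrow> 'a set) \<Rightarrow> nat \<Rightarrow> 'a set set" where
  "crossing_edges G T X t = {e \<in> edges G. \<exists>C1\<in>comps_minus T t. \<exists>C2\<in>comps_minus T t. C1 \<noteq> C2 \<and>
      (\<exists>x\<in>(\<Union>s\<in>C1. X s). \<exists>y\<in>(\<Union>s\<in>C2. X s). e = {x, y})}"

lemma cross_eq_card_crossing_edges: "cross G T X t = card (crossing_edges G T X t)"
  unfolding cross_def crossing_edges_def ..

lemma crossing_edgesI:
  assumes "e \<in> edges G" "C1 \<in> comps_minus T t" "C2 \<in> comps_minus T t" "C1 \<noteq> C2"
    and "s1 \<in> C1" "s2 \<in> C2" "x \<in> X s1" "y \<in> X s2" "e = {x, y}"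
  shows "e \<in> crossing_edges G T X t"
  unfolding crossing_edges_def using assms by blast

lemma crossing_edgesE:
  assumes "e \<in> crossing_edges G T X t"
  obtains C1 C2 s1 s2 x y where "e \<in> edges G" "C1 \<in> comps_minus T t" "C2 \<in> comps_minus T t"
    "C1 \<noteq> C2" "s1 \<in> C1" "s2 \<in> C2" "x \<in> X s1" "y \<in> X s2" "e = {x, y}"
  using assms unfolding crossing_edges_def by blast

lemma rtranclp_leaves_set:
  assumes "R\<^sup>*\<^sup>* a b" "P a" "\<not> P b"
  shows "\<exists>x y. R x y \<and> P x \<and> \<not> P y"
  using assms by (induction rule: rtranclp_induct) auto

lemma (in path_embedding) path_meets_crossing_edges:
  assumes wf: "wf_graph H" and dec: "tree_cut_decomp H T X" and t: "t \<in> verts T"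
    and e: "e \<in> crossing_edges G T (\<lambda>s. X s \<inter> verts G) t" and avoid: "I e \<inter> X t = {}"
  shows "E e \<inter> crossing_edges H T X t \<noteq> {}"
proof -
  have disjX: "s \<in> verts T \<Longrightarrow> s' \<in> verts T \<Longrightarrow> s \<noteq> s' \<Longrightarrow> X s \<inter> X s' = {}" for s s'
    using dec unfolding tree_cut_decomp_def by blast
  have unX: "(\<Union>s\<in>verts T. X s) = verts H"
    using dec unfolding tree_cut_decomp_def by blast
  obtain C1 C2 s1 s2 x y where C1: "C1 \<in> comps_minus T t" and C2: "C2 \<in> comps_minus T t"
    and "C1 \<noteq> C2" and s1: "s1 \<in> C1" and s2: "s2 \<in> C2" and x: "x \<in> X s1" and y: "y \<in> X s2"
    and eG: "e \<in> edges G" and exy: "e = {x, y}"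
    using e by (elim crossing_edgesE) blast
  have s1T: "s1 \<in> verts T - {t}" and s2T: "s2 \<in> verts T - {t}"
    using comps_minus_subset C1 C2 s1 s2 by blast+
  define inside where "inside z \<longleftrightarrow> (\<exists>s\<in>C1. z \<in> X s)" for z
  have "\<not> inside y"
  proof
    assume "inside y"
    then obtain s where "s \<in> C1" "y \<in> X s" unfolding inside_def by blast
    with comps_minus_subset[OF C1] disjX s2T y have "s = s2" by blast
    with comps_minus_eqI[OF C1 C2] \<open>s \<in> C1\<close> s2 \<open>C1 \<noteq> C2\<close> show False by blast
  qed
  moreover have "inside x" using s1 x unfolding inside_def by blast
  ultimately obtain a b where ab: "{a, b} \<in> E e" and "inside a" and "\<not> inside b"
    using rtranclp_leaves_set[OF path_connects[OF eG exy]] by blast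
  have abH: "{a, b} \<in> edges H" using path_edges_subset[OF eG] ab by blast
  have "b \<notin> X t"
  proof
    assume "b \<in> X t"
    moreover have "b \<in> e \<union> I e" using path_edge_subset[OF eG ab] by blast
    ultimately have "b = x \<or> b = y" using avoid exy by blast
    with \<open>b \<in> X t\<close> show False using disjX[OF _ t] s1T s2T x y by blast
  qed
  moreover obtain s where sT: "s \<in> verts T" and bs: "b \<in> X s"
    using wf_graph_edge_ends[OF wf abH] unX by blast
  ultimately obtain D where D: "D \<in> comps_minus T t" and "s \<in> D"
    using comps_minus_cover[of s T t] by blast
  moreover have "D \<noteq> C1" using \<open>\<not> inside b\<close> \<open>s \<in> D\<close> bs unfolding inside_def by blast
  moreover obtain s' where "s' \<in> C1" "a \<in> X s'" using \<open>inside a\<close> unfolding inside_def by blast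
  ultimately have "{a, b} \<in> crossing_edges H T X t"
    using abH C1 bs by (intro crossing_edgesI[of _ _ C1 _ _ D s' s a _ b]) auto
  with ab show ?thesis by blast
qed

lemma card_le_if_disjoint_family_hits:
  assumes "finite S"
    and hit: "\<And>a. a \<in> A \<Longrightarrow> F a \<inter> S \<noteq> {}"
    and disj: "\<And>a b. a \<in> A \<Longrightarrow> b \<in> A \<Longrightarrow> a \<noteq> b \<Longrightarrow> F a \<inter> F b = {}"
  shows "card A \<le> card S"
proof -
  define f where "f a = (SOME s. s \<in> F a \<inter> S)" for a
  have f: "f a \<in> F a \<inter> S" if "a \<in> A" for a
  proof -
    have "\<exists>s. s \<in> F a \<inter> S" using hit[OF that] by blast
    then show ?thesis unfolding f_def by (rule someI_ex)
  qed
  have "inj_on f A"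
  proof (rule inj_onI)
    fix a b assume a: "a \<in> A" and b: "b \<in> A" and "f a = f b"
    then have "F a \<inter> F b \<noteq> {}" using f[OF a] f[OF b] by auto
    then show "a = b" using disj[OF a b] by blast
  qed
  with f \<open>finite S\<close> show ?thesis by (intro card_inj_on_le) auto
qed

lemma finite_bag:
  assumes "tree_cut_decomp H T X" "finite (verts H)" "t \<in> verts T"
  shows "finite (X t)"
proof -
  have "X t \<subseteq> verts H" using assms(1,3) unfolding tree_cut_decomp_def by blast
  then show ?thesis using assms(2) by (rule finite_subset)
qed

lemma (in path_embedding) cross_restrict_le:
  assumes wf: "wf_graph H" and dec: "tree_cut_decomp H T X" and t: "t \<in> verts T"
  shows "cross G T (\<lambda>s. X s \<inter> verts G) t \<le> cross H T X t + card (X t)"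
proof -
  let ?A = "crossing_edges G T (\<lambda>s. X s \<inter> verts G) t"
  let ?B = "crossing_edges H T X t"
  let ?A1 = "{e \<in> ?A. I e \<inter> X t \<noteq> {}}" and ?A2 = "{e \<in> ?A. I e \<inter> X t = {}}"
  have AG: "?A \<subseteq> edges G" unfolding crossing_edges_def by blast
  have "finite (X t)" using finite_bag[OF dec _ t] wf unfolding wf_graph_def by blast
  then have "card ?A1 \<le> card (X t)"
  proof (rule card_le_if_disjoint_family_hits)
    show "e \<in> ?A1 \<Longrightarrow> e' \<in> ?A1 \<Longrightarrow> e \<noteq> e' \<Longrightarrow> I e \<inter> I e' = {}" for e e'
      using AG inner_disjoint by blast
  qed blast
  moreover have "card ?A2 \<le> card ?B"
  proof (rule card_le_if_disjoint_family_hits)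
    show "finite ?B"
      using wf_graph_finite_edges[OF wf] unfolding crossing_edges_def by simp
    show "e \<in> ?A2 \<Longrightarrow> e' \<in> ?A2 \<Longrightarrow> e \<noteq> e' \<Longrightarrow> E e \<inter> E e' = {}" for e e'
      using AG path_edges_disjoint by blast
    show "e \<in> ?A2 \<Longrightarrow> E e \<inter> ?B \<noteq> {}" for e
      using path_meets_crossing_edges[OF wf dec t] by blast
  qed
  moreover have "card ?A \<le> card ?A1 + card ?A2"
  proof -
    have "card ?A = card (?A1 \<union> ?A2)" by (rule arg_cong[where f = card]) blast
    then show ?thesis using card_Un_le by simp
  qed
  ultimately show ?thesis unfolding cross_eq_card_crossing_edges by linarith
qed

subsection \<open>Edge-crossing width\<close>

lemma is_tree_singleton: "is_tree ({n}, {})"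
proof -
  have "\<not> has_cycle ({n}, {})"
  proof
    assume "has_cycle ({n}, {})"
    then obtain cs where "length cs \<ge> 3" "distinct cs" "set cs \<subseteq> {n}"
      unfolding has_cycle_def verts_def by auto
    then show False using distinct_card[of cs] card_mono[of "{n}" "set cs"] by simp
  qed
  then show ?thesis
    unfolding is_tree_def wf_graph_def connected_graph_def verts_def edges_def by simp
qed

lemma ecrw_le: "tree_cut_decomp G T X \<Longrightarrow> ecrw G \<le> ec_width G T X"
  unfolding ecrw_def by (rule Least_le) blast

lemma ecrw_attained: "\<exists>T X. tree_cut_decomp G T X \<and> ecrw G = ec_width G T X"
proof -
  have "tree_cut_decomp G ({0}, {}) (\<lambda>_. verts G)"
    using is_tree_singleton unfolding tree_cut_decomp_def verts_def by auto
  then have "\<exists>w T X. tree_cut_decomp G T X \<and> w = ec_width G T X" by blast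
  then show ?thesis unfolding ecrw_def by (rule LeastI_ex)
qed

lemma ec_width_le_iff:
  assumes "tree_cut_decomp G T X"
  shows "ec_width G T X \<le> k \<longleftrightarrow> (\<forall>t\<in>verts T. cross G T X t \<le> k \<and> card (X t) \<le> k)"
proof -
  have "is_tree T" using assms unfolding tree_cut_decomp_def by blast
  then have "finite (verts T)" "verts T \<noteq> {}" unfolding is_tree_def wf_graph_def by auto
  then show ?thesis
    unfolding ec_width_def crossing_number_def thickness_def by auto
qed

lemma tree_cut_decomp_restrict:
  "tree_cut_decomp H T X \<Longrightarrow> verts G \<subseteq> verts H \<Longrightarrow>
     tree_cut_decomp G T (\<lambda>s. X s \<inter> verts G)"
  unfolding tree_cut_decomp_def by blast

theorem lemma3p13:
  fixes G H :: "'a graph"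
  assumes "wf_graph G"
    and "is_subdivision H G"
  shows "ecrw G \<le> 2 * ecrw H"
proof -
  obtain I E where wf: "wf_graph H" and emb: "path_embedding G H I E"
    using subdivision_path_embedding assms unfolding is_subdivision_def by blast
  obtain T X where dec: "tree_cut_decomp H T X" and opt: "ecrw H = ec_width H T X"
    using ecrw_attained by blast
  let ?X = "\<lambda>s. X s \<inter> verts G"
  have dec': "tree_cut_decomp G T ?X"
    using tree_cut_decomp_restrict[OF dec path_embedding.verts_subset[OF emb]] .
  have "cross G T ?X t \<le> 2 * ecrw H \<and> card (?X t) \<le> 2 * ecrw H" if t: "t \<in> verts T" for t
  proof -
    have "cross H T X t \<le> ecrw H" "card (X t) \<le> ecrw H"
      using ec_width_le_iff[OF dec] opt t by auto
    moreover have "card (?X t) \<le> card (X t)"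
      using finite_bag[OF dec _ t] wf unfolding wf_graph_def by (simp add: card_mono)
    ultimately show ?thesis
      using path_embedding.cross_restrict_le[OF emb wf dec t] by linarith
  qed
  then have "ec_width G T ?X \<le> 2 * ecrw H" by (simp add: ec_width_le_iff[OF dec'])
  then show ?thesis using ecrw_le[OF dec'] by linarith
qed

end
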